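(* Let $\mathcal A\subset\mathbb R^n$ be compact with diameter $D_{\mathcal A}<\infty$, let $\mathcal X=\mathrm{conv}(\mathcal A)$ or $\mathcal X=\mathrm{lin}(\mathcal A)$, let $f$ be convex and differentiable with $L$-Lipschitz gradient, let $\eta\in(1,2)$, and let $\{x_t\}_{t\ge0}$ be generated by the AC-FW algorithm described in the context with Conditions (D) and (S) holding. Let $\{h_t\}_{t\ge0}$ denote the elements of $\mathcal G\cap\mathcal I_\eta$ in increasing order. Suppose there are constants $a>0$, $b\ge0$ with $|\mathcal G\cap\mathcal I_\eta\cap[t]|\ge at-b$ for all $t\ge0$, and a nonincreasing function $\rho:\mathbb N\to\mathbb R_+$ with $f(x_{h_t})-f(x^\star)\le \rho(t)$ for all $t\ge0$. Then for all $t\ge(b+1)/a$, $$f(x_t)-f(x^\star)\le \rho\bigl(\lceil at-b\rceil-1\bigr).$$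
   Context: $D_{\mathcal A}:=\sup_{x,y\in\mathcal A}\|x-y\|_2$; $\|\nabla f(x)-\nabla f(y)\|_2\le L\|x-y\|_2$. $x^\star$ is an optimal solution of $\min_{x\in\mathcal X}f(x)$. For $x\ne y$, $\ell(x,y):=2|f(y)-f(x)-\nabla f(x)^\top(y-x)|/\|y-x\|_2^2$, $\ell(x,x):=0$. AC-FW algorithm: given $\{r_t\}_{t\ge0}$ and a subroutine, pick $x_{-1}\in\mathcal A$, $x_0\in\arg\min_{v\in\mathcal A}\nabla f(x_{-1})^\top v$, $L_0:=\ell(x_{-1},x_0)$. For $t=0,1,\dots$: $v_t\in\arg\min_{v\in\mathcal A}\nabla f(x_t)^\top v$; the subroutine returns $d_t\in\mathbb R^n$, $\gamma_t^{\max}\in(0,\infty]$; $\gamma_t:=\min\{\nabla f(x_t)^\top d_t/(L_t\|d_t\|_2^2),\gamma_t^{\max}\}$; $\bar x_{t+1}:=x_t-\gamma_td_t$; $L_{t+1}:=\max\{\ell(x_t,\bar x_{t+1}),r_tL_t\}$; $x_{t+1}:=\bar x_{t+1}$ if $f(\bar x_{t+1})<f(x_t)$, else $x_{t+1}:=x_t$. $[t]:=\{0,\dots,t\}$; $\mathcal I_\eta:=\{t\ge0:L_{t+1}\le\eta L_t\}$; $\mathcal G:=\{t\ge0:\gamma_t^{\max}\ge1\text{ or }\gamma_t<\gamma_t^{\max}\}$. Condition (D): $r_t\in(0,1]$ for all $t$ and $\prod_{t\ge0}r_t\in(0,1]$. Condition (S): for all $t\ge0$: (i) $\|d_t\|_2\le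 D_{\mathcal A}$ and $x_t-\gamma d_t\in\mathcal X$ for all finite $\gamma\in[0,\gamma_t^{\max}]$; (ii) $\mathcal G$ is infinite; (iii) there is $R\ge1$ independent of $t$ with $\nabla f(x_t)^\top d_t\ge(f(x_t)-f(x^\star))/R$. *)

theory Defs
  imports "HOL-Analysis.Analysis" "HOL-Library.Infinite_Set" "HOL-Library.Extended_Real"
begin

definition ell :: "('a::euclidean_space \<Rightarrow> real) \<Rightarrow> ('a \<Rightarrow> 'a) \<Rightarrow> 'a \<Rightarrow> 'a \<Rightarrow> real" where
  "ell f grad x y = (if x = y then 0
     else 2 * \<bar>f y - f x - grad x \<bullet> (y - x)\<bar> / (norm (y - x))^2)"

end

theory Submission
  imports Defs
begin

text \<open>Since AC-FW only accepts a candidate that strictly decreases f, the values f(x_t) are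
  nonincreasing. The linear counting bound forces G \<inter> I_\<eta> to be infinite (so that its
  enumeration h is meaningful) and gives k \<ge> \<lceil>a t - b\<rceil> \<ge> 1 elements of G \<inter> I_\<eta> up to t,
  so the (k-1)-th of them, h_{k-1}, is at most t and f(x_t) \<le> f(x_{h_{k-1}}) \<le> \<rho>(k-1) \<le>
  \<rho>(\<lceil>a t - b\<rceil> - 1). The smoothness and step-size hypotheses only enter through the
  assumed rate \<rho>.\<close>

lemma enumerate_le_if_Suc_le_card:
  fixes S :: "nat set"
  assumes inf: "infinite S" and card: "Suc j \<le> card (S \<inter> {0..t})"
  shows "enumerate S j \<le> t"
proof (rule ccontr)
  assume "\<not> enumerate S j \<le> t"
  have "S \<inter> {0..t} \<subseteq> enumerate S ` {..<j}"
  proof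
    fix s assume s: "s \<in> S \<inter> {0..t}"
    then obtain n where n: "enumerate S n = s"
      using enumerate_Ex[OF inf] by blast
    with s \<open>\<not> enumerate S j \<le> t\<close> have "enumerate S n < enumerate S j"
      by auto
    then have "n < j"
      using inf by simp
    with n show "s \<in> enumerate S ` {..<j}"
      by auto
  qed
  then have "card (S \<inter> {0..t}) \<le> card (enumerate S ` {..<j})"
    by (intro card_mono) auto
  also have "\<dots> \<le> j"
    using card_image_le[of "{..<j}" "enumerate S"] by simp
  finally show False
    using card by simp
qed

lemma infinite_if_card_Int_atLeastAtMost_ge_linear:
  fixes S :: "nat set" and a b :: real
  assumes "a > 0" and count: "\<And>t. a * real t - b \<le> real (card (S \<inter> {0..t}))"
  shows "infinite S"
proof
  assume fin: "finite S"
  define m where "m = nat \<lceil>(real (card S) + b + 1) / a\<rceil>"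
  have "(real (card S) + b + 1) / a \<le> real m"
    unfolding m_def by linarith
  then have "real (card S) + b + 1 \<le> a * real m"
    using \<open>a > 0\<close> by (simp add: field_simps)
  moreover have "card (S \<inter> {0..m}) \<le> card S"
    using fin by (intro card_mono) auto
  ultimately show False
    using count[of m] by linarith
qed

lemma nat_ceiling_minus_one_le:
  fixes z :: real
  assumes "z \<le> real k" and "1 \<le> z"
  shows "nat (\<lceil>z\<rceil> - 1) \<le> k - 1"
  using assms by (simp add: ceiling_le_iff nat_le_iff) linarith

theorem corollary2:
  fixes A X :: "'a::euclidean_space set"
    and f :: "'a \<Rightarrow> real" and grad :: "'a \<Rightarrow> 'a" and L :: real
    and xstar xm1 :: 'a
    and x v d xbar :: "nat \<Rightarrow> 'a"
    and gmax :: "nat \<Rightarrow> ereal"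
    and gam Lc r :: "nat \<Rightarrow> real"
    and \<eta> a b :: real and \<rho> :: "nat \<Rightarrow> real"
    and G I :: "nat set"
  assumes A_compact: "compact A" and A_ne: "A \<noteq> {}"
    and X_def: "X = convex hull A \<or> X = span A"
    and f_convex: "convex_on UNIV f"
    and f_grad: "\<And>y. (f has_derivative (\<lambda>h. grad y \<bullet> h)) (at y)"
    and grad_lip: "\<And>y z. norm (grad y - grad z) \<le> L * norm (y - z)"
    and xstar_in: "xstar \<in> X" and xstar_opt: "\<And>y. y \<in> X \<Longrightarrow> f xstar \<le> f y"
    \<comment> \<open>initialisation of AC-FW\<close>
    and xm1_in: "xm1 \<in> A"
    and x0_in: "x 0 \<in> A" and x0_min: "\<And>u. u \<in> A \<Longrightarrow> grad xm1 \<bullet> x 0 \<le> grad xm1 \<bullet> u"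
    and L0: "Lc 0 = ell f grad xm1 (x 0)"
    \<comment> \<open>iteration of AC-FW\<close>
    and v_in: "\<And>t. v t \<in> A"
    and v_min: "\<And>t u. u \<in> A \<Longrightarrow> grad (x t) \<bullet> v t \<le> grad (x t) \<bullet> u"
    and gmax_pos: "\<And>t. gmax t > 0"
    and gam_def: "\<And>t. ereal (gam t) =
        min (ereal (grad (x t) \<bullet> d t / (Lc t * (norm (d t))^2))) (gmax t)"
    and xbar_def: "\<And>t. xbar (Suc t) = x t - gam t *\<^sub>R d t"
    and Lc_def: "\<And>t. Lc (Suc t) = max (ell f grad (x t) (xbar (Suc t))) (r t * Lc t)"
    and x_def: "\<And>t. x (Suc t) = (if f (xbar (Suc t)) < f (x t) then xbar (Suc t) else x t)"
    \<comment> \<open>Condition (D)\<close>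
    and r_range: "\<And>t. 0 < r t \<and> r t \<le> 1"
    and r_prod: "\<exists>p. 0 < p \<and> p \<le> 1 \<and> (\<lambda>T. \<Prod>t<T. r t) \<longlonglongrightarrow> p"
    \<comment> \<open>Condition (S)\<close>
    and G_def: "G = {t. gmax t \<ge> 1 \<or> ereal (gam t) < gmax t}"
    and S1: "\<And>t. norm (d t) \<le> diameter A"
    and S1': "\<And>t \<gamma>. 0 \<le> \<gamma> \<Longrightarrow> ereal \<gamma> \<le> gmax t \<Longrightarrow> x t - \<gamma> *\<^sub>R d t \<in> X"
    and S2: "infinite G"
    and S3: "\<exists>R\<ge>1. \<forall>t. grad (x t) \<bullet> d t \<ge> (f (x t) - f xstar) / R"
    \<comment> \<open>corollary hypotheses\<close>
    and eta: "1 < \<eta>" "\<eta> < 2"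
    and I_def: "I = {t. Lc (Suc t) \<le> \<eta> * Lc t}"
    and ab: "a > 0" "b \<ge> 0"
    and count: "\<And>t. real (card (G \<inter> I \<inter> {0..t})) \<ge> a * real t - b"
    and rho_mono: "antimono \<rho>" and rho_nonneg: "\<And>n. \<rho> n \<ge> 0"
    and rho_bound: "\<And>t. f (x (enumerate (G \<inter> I) t)) - f xstar \<le> \<rho> t"
  shows "\<forall>t. real t \<ge> (b + 1) / a \<longrightarrow>
           f (x t) - f xstar \<le> \<rho> (nat (\<lceil>a * real t - b\<rceil> - 1))"
proof (intro allI impI)
  fix t :: nat
  assume "(b + 1) / a \<le> real t"
  then have one_le: "1 \<le> a * real t - b"
    using ab by (simp add: field_simps)
  define k where "k = card (G \<inter> I \<inter> {0..t})"
  have k_ge: "a * real t - b \<le> real k"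
    using count[of t] unfolding k_def .
  have "k \<ge> 1"
    using k_ge one_le by linarith
  have "infinite (G \<inter> I)"
    using ab(1) count by (rule infinite_if_card_Int_atLeastAtMost_ge_linear)
  then have h_le: "enumerate (G \<inter> I) (k - 1) \<le> t"
    using \<open>k \<ge> 1\<close> by (intro enumerate_le_if_Suc_le_card) (simp_all add: k_def)
  have "antimono (\<lambda>n. f (x n))"
    using x_def by (simp add: antimono_iff_le_Suc)
  then have "f (x t) - f xstar \<le> f (x (enumerate (G \<inter> I) (k - 1))) - f xstar"
    using h_le by (simp add: antimono_def)
  also have "\<dots> \<le> \<rho> (k - 1)"
    by (rule rho_bound)
  also have "\<dots> \<le> \<rho> (nat (\<lceil>a * real t - b\<rceil> - 1))"
    using rho_mono nat_ceiling_minus_one_le[OF k_ge one_le] by (simp add: antimono_def)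
  finally show "f (x t) - f xstar \<le> \<rho> (nat (\<lceil>a * real t - b\<rceil> - 1))" .
qed

end
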